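(* Let $\mathcal{P}\subseteq[0,1]^n$ be a polytope with $\mathcal{P}\cap(0,1)^n\neq\emptyset$. If the interior of $\mathcal{P}$ is the unique open face of $\mathcal{P}$ contained in $(0,1)^n$, then $\mathcal{P}=[0,1]^n\cap\mathcal{H}$ for some affine subspace $\mathcal{H}\subseteq\mathbb{R}^n$.
   Context: A face of $\mathcal{P}$ is a set of the form $F=\arg\max_{p\in\mathcal{P}}w^Tp$ for some $w\in\mathbb{R}^n$ (taking $w=0$ gives $\mathcal{P}$ itself); its dimension is that of its affine span. The open face $\tilde F$ corresponding to a face $F$ is the set of points of $F$ that belong to no face of $\mathcal{P}$ of lower dimension. The interior of $\mathcal{P}$ means the open face corresponding to the face $\mathcal{P}$ itself (its relative interior). *)

theory Defs
  imports "HOL-Analysis.Analysis"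
begin

text \<open>Faces in the paper's sense: argmax sets of linear functionals (w = 0 gives P itself).\<close>
definition is_lin_face :: "(real^'n) set \<Rightarrow> (real^'n) set \<Rightarrow> bool" where
  "is_lin_face P F \<longleftrightarrow> (\<exists>w::real^'n. F = {p \<in> P. \<forall>q \<in> P. w \<bullet> q \<le> w \<bullet> p})"

definition open_face :: "(real^'n) set \<Rightarrow> (real^'n) set \<Rightarrow> (real^'n) set" where
  "open_face P F = {x \<in> F. \<not> (\<exists>G. is_lin_face P G \<and> aff_dim G < aff_dim F \<and> x \<in> G)}"

definition unit_cube :: "(real^'n) set" where
  "unit_cube = {x. \<forall>i. 0 \<le> x $ i \<and> x $ i \<le> 1}"

definition open_unit_cube :: "(real^'n) set" where
  "open_unit_cube = {x. \<forall>i. 0 < x $ i \<and> x $ i < 1}"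

end

theory Submission
  imports Defs
begin

text \<open>Suppose \<open>P\<close> is not the trace of its affine hull on the cube, and pick \<open>y\<close> in
  \<open>unit_cube \<inter> affine hull P - P\<close> and \<open>x\<close> in \<open>P\<close> inside the open cube. The segment from \<open>x\<close>
  to \<open>y\<close> leaves \<open>P\<close> through a relative boundary point \<open>z\<close>, which still lies in the open cube.
  Let \<open>F\<close> be a face of least dimension containing \<open>z\<close>, so that \<open>z\<close> lies in its open face. A
  point of that open face on a boundary hyperplane \<open>x\<^sub>i = 0\<close> or \<open>x\<^sub>i = 1\<close> of the cube would
  lie in the smaller face cut out of \<open>F\<close> by that hyperplane (smaller because it misses \<open>z\<close>), so
  the open face of \<open>F\<close> lies in the open cube. By hypothesis it is then the interior of \<open>P\<close>,
  which is absurd because \<open>z\<close> lies on the relative boundary.\<close>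

lemma unit_cube_eq_cbox: "unit_cube = cbox 0 (1 :: real^'n)"
  by (auto simp: unit_cube_def mem_box_cart)

lemma open_unit_cube_eq_box: "open_unit_cube = box 0 (1 :: real^'n)"
  by (auto simp: open_unit_cube_def mem_box_cart)

lemma closed_segment_in_open_unit_cube:
  assumes "x \<in> open_unit_cube" "y \<in> unit_cube" "z \<in> closed_segment x y" "z \<noteq> y"
  shows "z \<in> open_unit_cube"
proof (cases "z = x")
  case False
  with assms(3,4) have "z \<in> open_segment x y"
    by (simp add: open_segment_def)
  then show ?thesis
    using in_interior_closure_convex_segment[of "cbox 0 1" x y] assms(1,2)
    by (auto simp: unit_cube_eq_cbox open_unit_cube_eq_box)
qed (use assms(1) in simp)

lemma closed_segment_Int_rel_frontier_nonempty:
  fixes P :: "'a::euclidean_space set"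
  assumes "closed P" "x \<in> P" "y \<in> affine hull P" "y \<notin> P"
  shows "closed_segment x y \<inter> rel_frontier P \<noteq> {}"
proof
  assume no_frontier: "closed_segment x y \<inter> rel_frontier P = {}"
  obtain U where "open U" and U: "rel_interior P = affine hull P \<inter> U"
    using openin_rel_interior[of P] by (auto simp: openin_open)
  have segment_aff: "closed_segment x y \<subseteq> affine hull P"
    using assms(2,3) by (intro closed_segment_subset) (auto intro: hull_inc)
  have in_rel_interior: "s \<in> rel_interior P" if "s \<in> closed_segment x y" "s \<in> P" for s
    using no_frontier that assms(1) by (auto simp: rel_frontier_def)
  have "U \<inter> closed_segment x y = {} \<or> - P \<inter> closed_segment x y = {}"
  proof (rule connectedD[OF connected_segment \<open>open U\<close>])
    show "open (- P)"
      using assms(1) by (simp add: open_Compl)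
    show "U \<inter> - P \<inter> closed_segment x y = {}"
      using segment_aff U rel_interior_subset by blast
    show "closed_segment x y \<subseteq> U \<union> - P"
      using in_rel_interior U by blast
  qed
  moreover have "x \<in> U"
    using in_rel_interior[of x] assms(2) U by auto
  ultimately show False
    using assms(4) by auto
qed

lemma is_lin_face_refl: "is_lin_face P P"
  unfolding is_lin_face_def by (rule exI[of _ 0]) simp

lemma is_lin_face_imp_face_of:
  assumes "convex P" "is_lin_face P F"
  shows "F face_of P"
proof (cases "F = {}")
  case False
  obtain w where w: "F = {p \<in> P. \<forall>q \<in> P. w \<bullet> q \<le> w \<bullet> p}"
    using assms(2) unfolding is_lin_face_def by blast
  obtain f where f: "f \<in> F"
    using False by blast
  have "F = P \<inter> {x. w \<bullet> x = w \<bullet> f}"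
    using f w by (auto intro: order_antisym)
  moreover have "(P \<inter> {x. w \<bullet> x = w \<bullet> f}) face_of P"
    using f w assms(1) by (intro face_of_Int_supporting_hyperplane_le) auto
  ultimately show ?thesis
    by simp
qed simp

lemma face_of_imp_is_lin_face:
  fixes P :: "(real^'n) set"
  assumes "polyhedron P" "F face_of P" "F \<noteq> {}"
  shows "is_lin_face P F"
proof -
  have "F exposed_face_of P"
    using assms(1,2) exposed_face_of_polyhedron by blast
  then obtain a b where ab: "P \<subseteq> {x. a \<bullet> x \<le> b}" "F = P \<inter> {x. a \<bullet> x = b}"
    unfolding exposed_face_of_def by blast
  obtain f where "f \<in> F"
    using assms(3) by blast
  then have "a \<bullet> f = b" "f \<in> P"
    using ab(2) by auto
  then have "F = {p \<in> P. \<forall>q \<in> P. a \<bullet> q \<le> a \<bullet> p}"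
    using ab by (auto intro: order_antisym)
  then show ?thesis
    unfolding is_lin_face_def by blast
qed

lemma ex_open_face_containing:
  assumes "z \<in> P"
  obtains F where "is_lin_face P F" "z \<in> open_face P F"
proof -
  obtain F where F: "is_lin_face P F" "z \<in> F"
    and least: "\<And>G. is_lin_face P G \<and> z \<in> G \<Longrightarrow> nat (aff_dim F + 1) \<le> nat (aff_dim G + 1)"
    using ex_has_least_nat[of "\<lambda>F. is_lin_face P F \<and> z \<in> F" P "\<lambda>F. nat (aff_dim F + 1)"]
      is_lin_face_refl assms by blast
  have "\<not> (is_lin_face P G \<and> aff_dim G < aff_dim F \<and> z \<in> G)" for G
    using least[of G] aff_dim_geq[of G] by linarith
  with F that show ?thesis
    unfolding open_face_def by blast
qed

lemma rel_frontier_notin_open_face_self: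
  fixes P :: "(real^'n) set"
  assumes "polyhedron P" "z \<in> rel_frontier P"
  shows "z \<notin> open_face P P"
proof -
  obtain G where G: "G face_of P" "G \<noteq> P" "z \<in> G"
    using rel_frontier_of_polyhedron_alt[OF assms(1)] assms(2) by blast
  have "is_lin_face P G"
    using face_of_imp_is_lin_face[OF assms(1) G(1)] G(3) by blast
  moreover have "aff_dim G < aff_dim P"
    using face_of_aff_dim_lt[OF polyhedron_imp_convex[OF assms(1)] G(1,2)] .
  ultimately show ?thesis
    using G(3) unfolding open_face_def by blast
qed

lemma face_of_coordinate_slice:
  fixes P :: "(real^'n) set"
  assumes "convex P" "P \<subseteq> unit_cube" "c = 0 \<or> c = 1"
  shows "{p \<in> P. p $ i = c} face_of P"
proof -
  have bounds: "0 \<le> axis i 1 \<bullet> p \<and> axis i 1 \<bullet> p \<le> 1" if "p \<in> P" for p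
    using assms(2) that unfolding unit_cube_def by (auto simp: inner_axis')
  have "{p \<in> P. p $ i = c} = P \<inter> {p. axis i 1 \<bullet> p = c}"
    by (auto simp: inner_axis')
  also have "\<dots> face_of P"
    using assms(3)
  proof
    assume "c = 0"
    then show ?thesis
      using bounds by (intro face_of_Int_supporting_hyperplane_ge assms(1)) simp
  next
    assume "c = 1"
    then show ?thesis
      using bounds by (intro face_of_Int_supporting_hyperplane_le assms(1)) simp
  qed
  finally show ?thesis .
qed

lemma open_face_subset_open_unit_cube:
  fixes P :: "(real^'n) set"
  assumes "polyhedron P" "P \<subseteq> unit_cube"
    and F: "is_lin_face P F" "z \<in> F" "z \<in> open_unit_cube"
  shows "open_face P F \<subseteq> open_unit_cube"
proof
  fix x assume x: "x \<in> open_face P F"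
  have "convex P"
    using assms(1) by (rule polyhedron_imp_convex)
  have "F face_of P"
    using is_lin_face_imp_face_of[OF \<open>convex P\<close> F(1)] .
  have "x \<in> F"
    using x unfolding open_face_def by simp
  then have "x \<in> P"
    using face_of_imp_subset[OF \<open>F face_of P\<close>] by blast
  show "x \<in> open_unit_cube"
  proof (rule ccontr)
    assume "x \<notin> open_unit_cube"
    then obtain i where i: "\<not> (0 < x $ i \<and> x $ i < 1)"
      unfolding open_unit_cube_def by blast
    have "0 \<le> x $ i" "x $ i \<le> 1"
      using \<open>x \<in> P\<close> assms(2) unfolding unit_cube_def by auto
    then obtain c where c: "c = 0 \<or> c = 1" "x $ i = c"
      using i by fastforce
    define K where "K = F \<inter> {p \<in> P. p $ i = c}"
    have "K face_of P"
      unfolding K_def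
      by (rule face_of_Int[OF \<open>F face_of P\<close> face_of_coordinate_slice[OF \<open>convex P\<close> assms(2) c(1)]])
    have "x \<in> K"
      unfolding K_def using \<open>x \<in> F\<close> \<open>x \<in> P\<close> c(2) by simp
    have "0 < z $ i" "z $ i < 1"
      using F(3) unfolding open_unit_cube_def by auto
    then have "z \<notin> K"
      using c(1) unfolding K_def by auto
    have "K \<subseteq> F"
      unfolding K_def by blast
    then have "K face_of F"
      by (rule face_of_subset[OF \<open>K face_of P\<close> _ face_of_imp_subset[OF \<open>F face_of P\<close>]])
    moreover have "K \<noteq> F"
      using \<open>z \<notin> K\<close> F(2) by blast
    ultimately have "aff_dim K < aff_dim F"
      by (rule face_of_aff_dim_lt[OF face_of_imp_convex[OF \<open>F face_of P\<close>]])
    moreover have "is_lin_face P K"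
      using face_of_imp_is_lin_face[OF assms(1) \<open>K face_of P\<close>] \<open>x \<in> K\<close> by blast
    ultimately show False
      using x \<open>x \<in> K\<close> unfolding open_face_def by blast
  qed
qed

theorem lemmaB6:
  fixes P :: "(real^'n) set"
  assumes "polytope P"
    and "P \<subseteq> unit_cube"
    and "P \<inter> open_unit_cube \<noteq> {}"
    and "open_face P P \<subseteq> open_unit_cube"
    and "\<forall>F. is_lin_face P F \<and> open_face P F \<subseteq> open_unit_cube \<longrightarrow> open_face P F = open_face P P"
  shows "\<exists>H. affine H \<and> P = unit_cube \<inter> H"
proof (rule ccontr)
  assume "\<not> ?thesis"
  then have "P \<noteq> unit_cube \<inter> affine hull P"
    using affine_affine_hull by blast
  with assms(2) obtain y where y: "y \<in> unit_cube" "y \<in> affine hull P" "y \<notin> P"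
    using hull_subset[of P affine] by blast
  obtain x where x: "x \<in> P" "x \<in> open_unit_cube"
    using assms(3) by blast
  have "polyhedron P" "closed P"
    using assms(1) polytope_imp_polyhedron polytope_imp_closed by blast+
  obtain z where z: "z \<in> closed_segment x y" "z \<in> rel_frontier P"
    using closed_segment_Int_rel_frontier_nonempty[OF \<open>closed P\<close> x(1) y(2,3)] by blast
  have "z \<in> P"
    using z(2) \<open>closed P\<close> by (simp add: rel_frontier_def)
  then have "z \<in> open_unit_cube"
    using closed_segment_in_open_unit_cube[OF x(2) y(1) z(1)] y(3) by blast
  obtain F where F: "is_lin_face P F" "z \<in> open_face P F"
    using ex_open_face_containing[OF \<open>z \<in> P\<close>] .
  have "open_face P F \<subseteq> open_unit_cube"
    using open_face_subset_open_unit_cube[OF \<open>polyhedron P\<close> assms(2) F(1) _ \<open>z \<in> open_unit_cube\<close>]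
      F(2) unfolding open_face_def by blast
  with assms(5) F have "z \<in> open_face P P"
    by blast
  with rel_frontier_notin_open_face_self[OF \<open>polyhedron P\<close> z(2)] show False
    by blast
qed

end
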